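(* Let $\sigma>0$, $q\in(2,\infty)$ and $\theta\in(1,\infty)$ with $\frac12+\frac1\theta=\frac1q+1$, and let $m_0\in\{-1,+1\}$. There exists a constant $C=C(n,\theta)>0$ (depending also on the fixed profile $\tilde\chi$) such that for almost every $r>0$, $$\big\|[S_r^{\chi_\sigma}(f)](t,\cdot)\big\|_{L^q(\mathbb R^{2n})}\le C\,\sigma^{2n(\frac1\theta-1)}\,r^{2n(\frac1\theta-1)}\,\|f(t+m_0r,\cdot)\|_{L^2(\mathbb R^{2n})}$$ for every measurable $f:\mathbb R^{1+2n}\to\mathbb R$ with $f(s,\cdot)\in L^2(\mathbb R^{2n})$ for all $s\in\mathbb R$, and every $t\in\mathbb R$.
   Context: Let $g_1(r)=r^{3/2}\cos(\log r)$, $g_2(r)=r^{3/2}\sin(\log r)$ ($r>0$). For $\mathbf m=(m_0,m_1,m_2)\in(\mathbb R\setminus\{0\})\times\mathbb R^n\times\mathbb R^n$ and $(t,x,v)\in\mathbb R^{1+2n}$ the critical kinetic trajectory is $\gamma^{\mathbf m}(r;(t,x,v))=\big(t+m_0r,\; x+m_0rv+g_1(r)m_1+m_0g_2(r)m_2,\; v+m_0^{-1}\dot g_1(r)m_1+\dot g_2(r)m_2\big)$, $r\ge0$. Fix a nonnegative $\tilde\chi\in C_c^\infty(\mathbb R^{2n})$, not identically zero, and set $\chi_\sigma=\tilde\chi(\sigma^{-1}\cdot)$. For $m_0=\pm1$ the kinetic mollification of $f$ at artificial time $r\ge0$ is $[S_r^{\chi}(f)](t,x,v)=\frac1{c_\chi}\int_{\mathbb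 R^{2n}}f\big(\gamma^{(m_0,m_1,m_2)}(r;(t,x,v))\big)\chi(m_1,m_2)\,d(m_1,m_2)$, where $c_\chi=\int_{\mathbb R^{2n}}\chi$. *)

theory Defs
  imports "HOL-Analysis.Analysis"
begin

text \<open>The functions g1, g2 of the paper (only used for r > 0).\<close>
definition g1 :: "real \<Rightarrow> real" where
  "g1 r = r powr (3/2) * cos (ln r)"

definition g2 :: "real \<Rightarrow> real" where
  "g2 r = r powr (3/2) * sin (ln r)"

text \<open>Points of R^{2n} are pairs (x,v) of vectors in R^n; points of R^{1+2n} are (t,(x,v)).\<close>
type_synonym 'n phase = "(real^'n) \<times> (real^'n)"

definition kin_traj ::
  "real \<Rightarrow> 'n::finite phase \<Rightarrow> real \<Rightarrow> real \<times> 'n phase \<Rightarrow> real \<times> 'n phase" where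
  "kin_traj m0 m r z =
     (case z of (t, x, v) \<Rightarrow> case m of (m1, m2) \<Rightarrow>
       (t + m0 * r,
        x + (m0 * r) *\<^sub>R v + g1 r *\<^sub>R m1 + (m0 * g2 r) *\<^sub>R m2,
        v + (deriv g1 r / m0) *\<^sub>R m1 + deriv g2 r *\<^sub>R m2))"

definition kin_moll ::
  "real \<Rightarrow> ('n::finite phase \<Rightarrow> real) \<Rightarrow> real \<Rightarrow> (real \<times> 'n phase \<Rightarrow> real)
     \<Rightarrow> real \<times> 'n phase \<Rightarrow> real" where
  "kin_moll m0 chi r f z =
     (1 / integral\<^sup>L lborel chi) *
       (\<integral> m. f (kin_traj m0 m r z) * chi m \<partial>lborel)"

coinductive smooth_fun :: "('a::euclidean_space \<Rightarrow> real) \<Rightarrow> bool" where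
  "(\<forall>x. f differentiable (at x)) \<Longrightarrow>
   (\<forall>b\<in>Basis. smooth_fun (\<lambda>x. frechet_derivative f (at x) b)) \<Longrightarrow> smooth_fun f"

definition Lp_norm :: "real \<Rightarrow> ('a::euclidean_space \<Rightarrow> real) \<Rightarrow> ennreal" where
  "Lp_norm p g =
     (let I = (\<integral>\<^sup>+ z. ennreal (\<bar>g z\<bar> powr p) \<partial>lborel)
      in if I = \<infinity> then \<infinity> else ennreal (enn2real I powr (1 / p)))"

end

theory Submission
  imports Defs
begin

(* Write S(y) for the mollification at (t, y), c for the integral of chi, M for an upper bound of it,
   n = CARD('n) and F = f(t + m0 r, -). Cauchy-Schwarz against the weight chi gives
   S(y)^2 <= T(y) / c with T(y) = int |f(gamma(y, m))|^2 chi(m) dm. For fixed y the map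
   m |-> gamma(y, m) is affine with Jacobian (g1 g2' - g2 g1')^n = r^(2n), because the Wronskian
   of g1 and g2 is r^2; hence T <= M r^(-2n) ||F||_2^2. For fixed m the map y |-> gamma(y, m) is a
   shear, hence int T = c ||F||_2^2. Interpolating between the resulting L^infinity and L^2
   bounds on S gives ||S||_q <= (sqrt (M / c) r^(-n))^(1 - 2/q) ||F||_2 for every r > 0.
   Passing from chi to chi_sigma multiplies c by sigma^(2n), and n (1 - 2/q) = 2n (1 - 1/theta)
   by the Young relation. *)

lemma borel_measurable_comp_continuous:
  fixes H :: "'b::topological_space \<Rightarrow> 'c::topological_space" and \<phi> :: "'a::topological_space \<Rightarrow> 'b"
  assumes "H \<in> borel_measurable borel" and "continuous_on UNIV \<phi>"
  shows "(\<lambda>x. H (\<phi> x)) \<in> borel_measurable borel"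
  using measurable_comp[OF borel_measurable_continuous_onI[OF assms(2)] assms(1)] by (simp add: comp_def)

lemma nn_integral_lborel_affine:
  fixes G :: "'a::euclidean_space \<Rightarrow> ennreal"
  assumes [measurable]: "G \<in> borel_measurable borel" and k: "k \<noteq> 0"
  shows "(\<integral>\<^sup>+x. G (s + k *\<^sub>R x) \<partial>lborel) = ennreal (1 / \<bar>k\<bar> ^ DIM('a)) * (\<integral>\<^sup>+x. G x \<partial>lborel)"
proof -
  have "(\<integral>\<^sup>+x. G x \<partial>lborel) = ennreal (\<bar>k\<bar> ^ DIM('a)) * (\<integral>\<^sup>+x. G (s + k *\<^sub>R x) \<partial>lborel)"
    by (subst lborel_affine[OF k, of s]) (simp add: nn_integral_density nn_integral_distr nn_integral_cmult)
  moreover have "ennreal (1 / \<bar>k\<bar> ^ DIM('a)) * ennreal (\<bar>k\<bar> ^ DIM('a)) = 1"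
    using k by (simp add: ennreal_mult[symmetric])
  ultimately show ?thesis
    by (simp add: mult.assoc[symmetric])
qed

lemma nn_integral_lborel_scale:
  fixes G :: "'a::euclidean_space \<Rightarrow> ennreal"
  assumes "G \<in> borel_measurable borel" and "0 < \<sigma>"
  shows "(\<integral>\<^sup>+x. G ((1 / \<sigma>) *\<^sub>R x) \<partial>lborel) = ennreal (\<sigma> ^ DIM('a)) * (\<integral>\<^sup>+x. G x \<partial>lborel)"
  using nn_integral_lborel_affine[OF assms(1), of "1 / \<sigma>" 0] assms(2) by (simp add: power_one_over)

lemma nn_integral_lborel_affine_fst:
  fixes G :: "'a::euclidean_space \<times> 'a \<Rightarrow> ennreal"
  assumes G: "G \<in> borel_measurable borel" and a: "a \<noteq> 0"
  shows "(\<integral>\<^sup>+m. G (p + a *\<^sub>R fst m + b *\<^sub>R snd m, snd m) \<partial>lborel)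
    = ennreal (1 / \<bar>a\<bar> ^ DIM('a)) * (\<integral>\<^sup>+m. G m \<partial>lborel)"
proof -
  have G'[measurable]: "(\<lambda>m. G (p + a *\<^sub>R fst m + b *\<^sub>R snd m, snd m)) \<in> borel_measurable borel"
    by (rule borel_measurable_comp_continuous[OF G]) (intro continuous_intros)
  have [measurable]: "G \<in> borel_measurable (lborel \<Otimes>\<^sub>M lborel)"
    using G by (simp add: lborel_prod)
  have "(\<integral>\<^sup>+m. G (p + a *\<^sub>R fst m + b *\<^sub>R snd m, snd m) \<partial>lborel)
      = (\<integral>\<^sup>+v. \<integral>\<^sup>+x. G ((p + b *\<^sub>R v) + a *\<^sub>R x, v) \<partial>lborel \<partial>lborel)"
    using lborel_pair.nn_integral_snd[of "\<lambda>m. G (p + a *\<^sub>R fst m + b *\<^sub>R snd m, snd m)"] G'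
    by (simp add: lborel_prod algebra_simps)
  also have "\<dots> = (\<integral>\<^sup>+v. ennreal (1 / \<bar>a\<bar> ^ DIM('a)) * (\<integral>\<^sup>+u. G (u, v) \<partial>lborel) \<partial>lborel)"
    using a by (intro nn_integral_cong nn_integral_lborel_affine) measurable
  also have "\<dots> = ennreal (1 / \<bar>a\<bar> ^ DIM('a)) * (\<integral>\<^sup>+v. \<integral>\<^sup>+u. G (u, v) \<partial>lborel \<partial>lborel)"
    by (rule nn_integral_cmult) measurable
  also have "(\<integral>\<^sup>+v. \<integral>\<^sup>+u. G (u, v) \<partial>lborel \<partial>lborel) = (\<integral>\<^sup>+m. G m \<partial>lborel)"
    using lborel_pair.nn_integral_snd[of G] G by (simp add: lborel_prod)
  finally show ?thesis .
qed

lemma nn_integral_lborel_affine_snd: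
  fixes G :: "'a::euclidean_space \<times> 'a \<Rightarrow> ennreal"
  assumes G: "G \<in> borel_measurable borel" and k: "k \<noteq> 0"
  shows "(\<integral>\<^sup>+m. G (fst m, q + c *\<^sub>R fst m + k *\<^sub>R snd m) \<partial>lborel)
    = ennreal (1 / \<bar>k\<bar> ^ DIM('a)) * (\<integral>\<^sup>+m. G m \<partial>lborel)"
proof -
  have G'[measurable]: "(\<lambda>m. G (fst m, q + c *\<^sub>R fst m + k *\<^sub>R snd m)) \<in> borel_measurable borel"
    by (rule borel_measurable_comp_continuous[OF G]) (intro continuous_intros)
  have [measurable]: "G \<in> borel_measurable (lborel \<Otimes>\<^sub>M lborel)"
    using G by (simp add: lborel_prod)
  have "(\<integral>\<^sup>+m. G (fst m, q + c *\<^sub>R fst m + k *\<^sub>R snd m) \<partial>lborel)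
      = (\<integral>\<^sup>+x. \<integral>\<^sup>+v. G (x, (q + c *\<^sub>R x) + k *\<^sub>R v) \<partial>lborel \<partial>lborel)"
    using lborel.nn_integral_fst[of "\<lambda>m. G (fst m, q + c *\<^sub>R fst m + k *\<^sub>R snd m)" lborel] G'
    by (simp add: lborel_prod)
  also have "\<dots> = (\<integral>\<^sup>+x. ennreal (1 / \<bar>k\<bar> ^ DIM('a)) * (\<integral>\<^sup>+w. G (x, w) \<partial>lborel) \<partial>lborel)"
    using k by (intro nn_integral_cong nn_integral_lborel_affine) measurable
  also have "\<dots> = ennreal (1 / \<bar>k\<bar> ^ DIM('a)) * (\<integral>\<^sup>+x. \<integral>\<^sup>+w. G (x, w) \<partial>lborel \<partial>lborel)"
    by (rule nn_integral_cmult) measurable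
  also have "(\<integral>\<^sup>+x. \<integral>\<^sup>+w. G (x, w) \<partial>lborel \<partial>lborel) = (\<integral>\<^sup>+m. G m \<partial>lborel)"
    using lborel.nn_integral_fst[of G lborel] G by (simp add: lborel_prod)
  finally show ?thesis .
qed

lemma nn_integral_lborel_swap:
  fixes G :: "'a::euclidean_space \<times> 'b::euclidean_space \<Rightarrow> ennreal"
  assumes G: "G \<in> borel_measurable borel"
  shows "(\<integral>\<^sup>+m. G (snd m, fst m) \<partial>lborel) = (\<integral>\<^sup>+m. G m \<partial>lborel)"
proof -
  have G'[measurable]: "(\<lambda>m. G (snd m, fst m)) \<in> borel_measurable borel"
    by (rule borel_measurable_comp_continuous[OF G]) (intro continuous_intros)
  have "(\<integral>\<^sup>+m. G (snd m, fst m) \<partial>lborel) = (\<integral>\<^sup>+x. \<integral>\<^sup>+y. G (y, x) \<partial>lborel \<partial>lborel)"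
    using lborel.nn_integral_fst[of "\<lambda>m. G (snd m, fst m)" lborel] G' by (simp add: lborel_prod)
  also have "\<dots> = (\<integral>\<^sup>+m. G m \<partial>lborel)"
    using lborel_pair.nn_integral_snd[of G] G by (simp add: lborel_prod)
  finally show ?thesis .
qed

lemma nn_integral_lborel_block_affine:
  fixes H :: "'a::euclidean_space \<times> 'a \<Rightarrow> ennreal"
  assumes H: "H \<in> borel_measurable borel" and D: "a * d - b * c \<noteq> 0"
  shows "(\<integral>\<^sup>+m. H (p + a *\<^sub>R fst m + b *\<^sub>R snd m, q + c *\<^sub>R fst m + d *\<^sub>R snd m) \<partial>lborel)
    = ennreal (1 / \<bar>a * d - b * c\<bar> ^ DIM('a)) * (\<integral>\<^sup>+m. H m \<partial>lborel)"
proof -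
  have block: "(\<integral>\<^sup>+m. H (p + a *\<^sub>R fst m + b *\<^sub>R snd m, q + c *\<^sub>R fst m + d *\<^sub>R snd m) \<partial>lborel)
    = ennreal (1 / \<bar>a * d - b * c\<bar> ^ DIM('a)) * (\<integral>\<^sup>+m. H m \<partial>lborel)"
    if a: "a \<noteq> 0" and D: "a * d - b * c \<noteq> 0" for a b c d
  proof -
    \<comment> \<open>Factor the map into \<open>(x, v) \<mapsto> (p + a x + b v, v)\<close> followed by a map of the form
      \<open>(u, v) \<mapsto> (u, q' + (c/a) u + k v)\<close>.\<close>
    define k where "k = d - c * b / a"
    have k: "k \<noteq> 0" and det: "\<bar>a * d - b * c\<bar> = \<bar>a\<bar> * \<bar>k\<bar>"
      using a D by (auto simp: k_def field_simps abs_mult[symmetric])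
    define G where "G m = H (fst m, q - (c / a) *\<^sub>R p + (c / a) *\<^sub>R fst m + k *\<^sub>R snd m)" for m
    have G: "G \<in> borel_measurable borel"
      unfolding G_def by (rule borel_measurable_comp_continuous[OF H]) (intro continuous_intros)
    have "(\<integral>\<^sup>+m. H (p + a *\<^sub>R fst m + b *\<^sub>R snd m, q + c *\<^sub>R fst m + d *\<^sub>R snd m) \<partial>lborel)
        = (\<integral>\<^sup>+m. G (p + a *\<^sub>R fst m + b *\<^sub>R snd m, snd m) \<partial>lborel)"
      using a by (intro nn_integral_cong) (simp add: G_def k_def algebra_simps scaleR_diff_left)
    also have "\<dots> = ennreal (1 / \<bar>a\<bar> ^ DIM('a)) * (\<integral>\<^sup>+m. G m \<partial>lborel)"
      by (rule nn_integral_lborel_affine_fst[OF G a])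
    also have "(\<integral>\<^sup>+m. G m \<partial>lborel) = ennreal (1 / \<bar>k\<bar> ^ DIM('a)) * (\<integral>\<^sup>+m. H m \<partial>lborel)"
      unfolding G_def by (rule nn_integral_lborel_affine_snd[OF H k])
    finally show ?thesis
      by (simp add: det mult.assoc[symmetric] ennreal_mult[symmetric] power_mult_distrib)
  qed
  show ?thesis
  proof (cases "a = 0")
    case False
    then show ?thesis using block D by blast
  next
    case True
    then have b: "b \<noteq> 0" and D': "b * c - a * d \<noteq> 0"
      using D by auto
    have "(\<integral>\<^sup>+m. H (p + a *\<^sub>R fst m + b *\<^sub>R snd m, q + c *\<^sub>R fst m + d *\<^sub>R snd m) \<partial>lborel)
        = (\<integral>\<^sup>+m. H (p + b *\<^sub>R fst m + a *\<^sub>R snd m, q + d *\<^sub>R fst m + c *\<^sub>R snd m) \<partial>lborel)"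
      by (subst nn_integral_lborel_swap[symmetric])
        (simp_all add: algebra_simps borel_measurable_comp_continuous[OF H] continuous_intros)
    also have "\<dots> = ennreal (1 / \<bar>b * c - a * d\<bar> ^ DIM('a)) * (\<integral>\<^sup>+m. H m \<partial>lborel)"
      using block[OF b D'] .
    finally show ?thesis
      by (simp add: abs_minus_commute)
  qed
qed

lemma weighted_average_sq_le:
  fixes g w :: "'a \<Rightarrow> real"
  assumes [measurable]: "g \<in> borel_measurable M" "w \<in> borel_measurable M"
    and w_nonneg: "\<And>x. 0 \<le> w x" and w_int: "(\<integral>\<^sup>+x. ennreal (w x) \<partial>M) = ennreal c" and c: "0 < c"
  shows "ennreal ((1 / c * (\<integral>x. g x * w x \<partial>M))\<^sup>2) \<le> ennreal (1 / c) * (\<integral>\<^sup>+x. ennreal ((g x)\<^sup>2 * w x) \<partial>M)"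
proof -
  have abs_int: "ennreal \<bar>\<integral>x. g x * w x \<partial>M\<bar> \<le> (\<integral>\<^sup>+x. ennreal (\<bar>g x\<bar> * w x) \<partial>M)"
  proof (cases "integrable M (\<lambda>x. g x * w x)")
    case True
    then have "ennreal (norm (\<integral>x. g x * w x \<partial>M)) \<le> (\<integral>\<^sup>+x. norm (g x * w x) \<partial>M)"
      by (rule integral_norm_bound_ennreal)
    then show ?thesis
      by (simp add: abs_mult w_nonneg)
  qed (simp add: not_integrable_integral_eq)
  \<comment> \<open>Cauchy--Schwarz for the factorisation \<open>|g| w = \<surd>w \<cdot> |g| \<surd>w\<close>.\<close>
  have "(\<integral>\<^sup>+x. ennreal (\<bar>g x\<bar> * w x) \<partial>M)\<^sup>2
      = (\<integral>\<^sup>+x. ennreal (sqrt (w x)) * ennreal (\<bar>g x\<bar> * sqrt (w x)) \<partial>M)\<^sup>2"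
    by (simp add: ennreal_mult[symmetric] w_nonneg mult_ac flip: power2_eq_square)
  also have "\<dots> \<le> (\<integral>\<^sup>+x. ennreal (sqrt (w x)) ^ 2 \<partial>M) * (\<integral>\<^sup>+x. ennreal (\<bar>g x\<bar> * sqrt (w x)) ^ 2 \<partial>M)"
    by (rule Cauchy_Schwarz_nn_integral) measurable
  also have "\<dots> = ennreal c * (\<integral>\<^sup>+x. ennreal ((g x)\<^sup>2 * w x) \<partial>M)"
    by (simp add: ennreal_power w_nonneg w_int power_mult_distrib)
  finally have CS: "(\<integral>\<^sup>+x. ennreal (\<bar>g x\<bar> * w x) \<partial>M)\<^sup>2 \<le> ennreal c * (\<integral>\<^sup>+x. ennreal ((g x)\<^sup>2 * w x) \<partial>M)" .
  have "ennreal ((1 / c * (\<integral>x. g x * w x \<partial>M))\<^sup>2) = ennreal ((1 / c)\<^sup>2) * (ennreal \<bar>\<integral>x. g x * w x \<partial>M\<bar>)\<^sup>2"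
    by (simp add: ennreal_power ennreal_mult[symmetric] power_mult_distrib power_divide)
  also have "\<dots> \<le> ennreal ((1 / c)\<^sup>2) * (ennreal c * (\<integral>\<^sup>+x. ennreal ((g x)\<^sup>2 * w x) \<partial>M))"
    using abs_int CS by (intro mult_left_mono order_trans[OF power_mono CS]) auto
  also have "\<dots> = ennreal (1 / c) * (\<integral>\<^sup>+x. ennreal ((g x)\<^sup>2 * w x) \<partial>M)"
    using c by (simp add: mult.assoc[symmetric] ennreal_mult[symmetric] power2_eq_square)
  finally show ?thesis .
qed

lemma Lp_norm_eq:
  assumes "(\<integral>\<^sup>+y. ennreal (\<bar>g y\<bar> powr p) \<partial>lborel) = ennreal I" and "0 \<le> I"
  shows "Lp_norm p g = ennreal (I powr (1 / p))"
  using assms by (simp add: Lp_norm_def)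

lemma Lp_norm_le:
  assumes "(\<integral>\<^sup>+y. ennreal (\<bar>g y\<bar> powr p) \<partial>lborel) \<le> ennreal (A powr p)" and "0 \<le> A" and "0 < p"
  shows "Lp_norm p g \<le> ennreal A"
proof -
  obtain I where I: "(\<integral>\<^sup>+y. ennreal (\<bar>g y\<bar> powr p) \<partial>lborel) = ennreal I" "0 \<le> I"
    using assms(1) by (metis ennreal_cases ennreal_less_top infinity_ennreal_def leD)
  then have "I \<le> A powr p"
    using assms(1) by simp
  then have "I powr (1 / p) \<le> (A powr p) powr (1 / p)"
    using I(2) assms(3) by (intro powr_mono2) auto
  also have "\<dots> = A"
    using assms(2,3) by (simp add: powr_powr powr_one)
  finally show ?thesis
    by (simp add: Lp_norm_eq[OF I] ennreal_leI)
qed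

lemma Lp_norm_le_interpolation:
  fixes S :: "'a::euclidean_space \<Rightarrow> real"
  assumes [measurable]: "S \<in> borel_measurable borel"
    and sup: "\<And>y. \<bar>S y\<bar> \<le> K * B" and L2: "(\<integral>\<^sup>+y. ennreal ((S y)\<^sup>2) \<partial>lborel) \<le> ennreal (B\<^sup>2)"
    and K: "0 \<le> K" and B: "0 \<le> B" and q: "2 < q"
  shows "Lp_norm q S \<le> ennreal (K powr (1 - 2 / q) * B)"
proof (rule Lp_norm_le)
  have pointwise: "\<bar>S y\<bar> powr q \<le> (K * B) powr (q - 2) * (S y)\<^sup>2" for y
  proof -
    have "\<bar>S y\<bar> powr q = \<bar>S y\<bar> powr (q - 2) * (S y)\<^sup>2"
      using powr_add[of "\<bar>S y\<bar>" "q - 2" 2] by simp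
    also have "\<dots> \<le> (K * B) powr (q - 2) * (S y)\<^sup>2"
      using sup q by (intro mult_right_mono powr_mono2) auto
    finally show ?thesis .
  qed
  have "(\<integral>\<^sup>+y. ennreal (\<bar>S y\<bar> powr q) \<partial>lborel) \<le> (\<integral>\<^sup>+y. ennreal ((K * B) powr (q - 2)) * ennreal ((S y)\<^sup>2) \<partial>lborel)"
    using pointwise by (intro nn_integral_mono) (simp add: ennreal_mult[symmetric] ennreal_leI)
  also have "\<dots> = ennreal ((K * B) powr (q - 2)) * (\<integral>\<^sup>+y. ennreal ((S y)\<^sup>2) \<partial>lborel)"
    by (rule nn_integral_cmult) measurable
  also have "\<dots> \<le> ennreal ((K * B) powr (q - 2) * B\<^sup>2)"
    using L2 by (simp add: ennreal_mult mult_left_mono)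
  also have "(K * B) powr (q - 2) * B\<^sup>2 = K powr (q - 2) * B powr q"
    using powr_add[of B "q - 2" 2] B by (simp add: powr_mult)
  also have "\<dots> = (K powr (1 - 2 / q) * B) powr q"
  proof -
    have "(1 - 2 / q) * q = q - 2"
      using q by (simp add: field_simps)
    then show ?thesis
      by (simp add: powr_mult powr_powr)
  qed
  finally show "(\<integral>\<^sup>+y. ennreal (\<bar>S y\<bar> powr q) \<partial>lborel) \<le> ennreal ((K powr (1 - 2 / q) * B) powr q)" .
qed (use K B q in auto)

lemma smooth_fun_imp_continuous_on: "smooth_fun f \<Longrightarrow> continuous_on UNIV f"
  by (erule smooth_fun.cases)
    (auto intro: continuous_at_imp_continuous_on differentiable_imp_continuous_within)

lemma bounded_range_compact_support:
  fixes f :: "'a::topological_space \<Rightarrow> 'b::real_normed_vector"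
  assumes "continuous_on UNIV f" and "compact (closure {z. f z \<noteq> 0})"
  shows "bounded (range f)"
proof -
  have "range f \<subseteq> insert 0 (f ` closure {z. f z \<noteq> 0})"
    using closure_subset by fastforce
  moreover have "compact (f ` closure {z. f z \<noteq> 0})"
    using assms by (blast intro: compact_continuous_image continuous_on_subset)
  ultimately show ?thesis
    by (meson bounded_insert bounded_subset compact_imp_bounded)
qed

lemma integrable_compact_support:
  fixes f :: "'a::euclidean_space \<Rightarrow> real"
  assumes "continuous_on UNIV f" and "compact (closure {z. f z \<noteq> 0})"
  shows "integrable lborel f"
proof -
  have "integrable lborel (\<lambda>z. indicator (closure {z. f z \<noteq> 0}) z *\<^sub>R f z)"
    using assms by (blast intro: borel_integrable_compact continuous_on_subset)
  moreover have "(\<lambda>z. indicator (closure {z. f z \<noteq> 0}) z *\<^sub>R f z) = f"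
    using closure_subset[of "{z. f z \<noteq> 0}"] by (force simp: indicator_def)
  ultimately show ?thesis
    by simp
qed

lemma nn_integral_lborel_pos_continuous:
  fixes f :: "'a::euclidean_space \<Rightarrow> real"
  assumes cont: "continuous_on UNIV f" and z0: "0 < f z0"
  shows "0 < (\<integral>\<^sup>+z. ennreal (f z) \<partial>lborel)"
proof -
  have "open {z. f z0 / 2 < f z}"
    using cont by (intro open_Collect_less continuous_intros) auto
  moreover have "z0 \<in> {z. f z0 / 2 < f z}"
    using z0 by simp
  ultimately obtain e where e: "0 < e" "ball z0 e \<subseteq> {z. f z0 / 2 < f z}"
    by (meson open_contains_ball)
  have "emeasure lborel (ball z0 e) \<noteq> 0"
    using content_ball_pos[OF e(1), of z0] by (auto simp: measure_def)
  then have "0 < ennreal (f z0 / 2) * emeasure lborel (ball z0 e)"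
    using z0 by (simp add: zero_less_iff_neq_zero)
  also have "\<dots> = (\<integral>\<^sup>+z. ennreal (f z0 / 2) * indicator (ball z0 e) z \<partial>lborel)"
    by (simp add: nn_integral_cmult_indicator)
  also have "\<dots> \<le> (\<integral>\<^sup>+z. ennreal (f z) \<partial>lborel)"
  proof (intro nn_integral_mono)
    show "ennreal (f z0 / 2) * indicator (ball z0 e) z \<le> ennreal (f z)" for z
      using e(2) by (cases "z \<in> ball z0 e") (auto intro!: ennreal_leI)
  qed
  finally show ?thesis .
qed

lemma deriv_g1:
  assumes "0 < r"
  shows "deriv g1 r = r powr (1/2) * (3/2 * cos (ln r) - sin (ln r))"
proof (rule DERIV_imp_deriv)
  show "(g1 has_real_derivative r powr (1/2) * (3/2 * cos (ln r) - sin (ln r))) (at r)"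
    unfolding g1_def[abs_def] using assms
    by (auto intro!: derivative_eq_intros simp: powr_add[of r 1 "1/2", simplified] field_simps)
qed

lemma deriv_g2:
  assumes "0 < r"
  shows "deriv g2 r = r powr (1/2) * (3/2 * sin (ln r) + cos (ln r))"
proof (rule DERIV_imp_deriv)
  show "(g2 has_real_derivative r powr (1/2) * (3/2 * sin (ln r) + cos (ln r))) (at r)"
    unfolding g2_def[abs_def] using assms
    by (auto intro!: derivative_eq_intros simp: powr_add[of r 1 "1/2", simplified] field_simps)
qed

lemma g1_g2_wronskian:
  assumes "0 < r"
  shows "g1 r * deriv g2 r - g2 r * deriv g1 r = r\<^sup>2"
proof -
  have "g1 r * deriv g2 r - g2 r * deriv g1 r
      = r powr (3/2) * r powr (1/2) * (cos (ln r))\<^sup>2 + r powr (3/2) * r powr (1/2) * (sin (ln r))\<^sup>2"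
    using assms by (simp add: deriv_g1 deriv_g2 g1_def g2_def algebra_simps power2_eq_square)
  also have "\<dots> = r powr (3/2) * r powr (1/2)"
    by (simp flip: distrib_left)
  also have "\<dots> = r\<^sup>2"
    using assms by (simp flip: powr_add)
  finally show ?thesis .
qed

lemma kin_traj_eq:
  "kin_traj m0 m r (t, y) =
    (t + m0 * r,
     fst y + (m0 * r) *\<^sub>R snd y + g1 r *\<^sub>R fst m + (m0 * g2 r) *\<^sub>R snd m,
     snd y + (deriv g1 r / m0) *\<^sub>R fst m + deriv g2 r *\<^sub>R snd m)"
  by (simp add: kin_traj_def split: prod.splits)

lemma borel_measurable_kin_traj:
  assumes "G \<in> borel_measurable borel" and "continuous_on UNIV \<mu>" and "continuous_on UNIV \<eta>"
  shows "(\<lambda>x. G (kin_traj m0 (\<mu> x) r (t, \<eta> x))) \<in> borel_measurable borel"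
  by (rule borel_measurable_comp_continuous[OF assms(1)])
    (simp add: kin_traj_eq, intro continuous_intros assms(2,3))

lemma nn_integral_kin_traj_wrt_m:
  fixes G :: "real \<times> 'n::finite phase \<Rightarrow> ennreal"
  assumes G: "G \<in> borel_measurable borel" and m0: "m0 \<noteq> 0" and r: "0 < r"
  shows "(\<integral>\<^sup>+m. G (kin_traj m0 m r (t, y)) \<partial>lborel)
    = ennreal (1 / r ^ (2 * CARD('n))) * (\<integral>\<^sup>+z. G (t + m0 * r, z) \<partial>lborel)"
proof -
  define a b c d where "a = g1 r" and "b = m0 * g2 r" and "c = deriv g1 r / m0" and "d = deriv g2 r"
  have det: "a * d - b * c = r\<^sup>2"
    using g1_g2_wronskian[OF r] m0 by (simp add: a_def b_def c_def d_def)
  have G': "(\<lambda>z. G (t + m0 * r, z)) \<in> borel_measurable borel"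
    by (rule borel_measurable_comp_continuous[OF G]) (intro continuous_intros)
  have "(\<integral>\<^sup>+m. G (kin_traj m0 m r (t, y)) \<partial>lborel)
      = (\<integral>\<^sup>+m. G (t + m0 * r, (fst y + (m0 * r) *\<^sub>R snd y) + a *\<^sub>R fst m + b *\<^sub>R snd m,
                                 snd y + c *\<^sub>R fst m + d *\<^sub>R snd m) \<partial>lborel)"
    by (simp add: kin_traj_eq a_def b_def c_def d_def)
  also have "\<dots> = ennreal (1 / \<bar>a * d - b * c\<bar> ^ DIM(real^'n)) * (\<integral>\<^sup>+z. G (t + m0 * r, z) \<partial>lborel)"
    by (rule nn_integral_lborel_block_affine[OF G']) (use det r in simp)
  finally show ?thesis
    by (simp add: det power_mult)
qed

lemma nn_integral_kin_traj_wrt_y: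
  fixes G :: "real \<times> 'n::finite phase \<Rightarrow> ennreal"
  assumes G: "G \<in> borel_measurable borel"
  shows "(\<integral>\<^sup>+y. G (kin_traj m0 m r (t, y)) \<partial>lborel) = (\<integral>\<^sup>+z. G (t + m0 * r, z) \<partial>lborel)"
proof -
  have G': "(\<lambda>z. G (t + m0 * r, z)) \<in> borel_measurable borel"
    by (rule borel_measurable_comp_continuous[OF G]) (intro continuous_intros)
  have "(\<integral>\<^sup>+y. G (kin_traj m0 m r (t, y)) \<partial>lborel)
      = (\<integral>\<^sup>+y. G (t + m0 * r, (g1 r *\<^sub>R fst m + (m0 * g2 r) *\<^sub>R snd m) + 1 *\<^sub>R fst y + (m0 * r) *\<^sub>R snd y,
            ((deriv g1 r / m0) *\<^sub>R fst m + deriv g2 r *\<^sub>R snd m) + 0 *\<^sub>R fst y + 1 *\<^sub>R snd y) \<partial>lborel)"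
    by (simp add: kin_traj_eq algebra_simps)
  also have "\<dots> = (\<integral>\<^sup>+z. G (t + m0 * r, z) \<partial>lborel)"
    using nn_integral_lborel_block_affine[OF G', of 1 1 "m0 * r" 0] by simp
  finally show ?thesis .
qed

lemma borel_measurable_kin_moll:
  fixes chi :: "'n::finite phase \<Rightarrow> real"
  assumes f: "f \<in> borel_measurable borel" and chi: "chi \<in> borel_measurable borel"
  shows "(\<lambda>y. kin_moll m0 chi r f (t, y)) \<in> borel_measurable borel"
proof -
  have "(\<lambda>p. f (kin_traj m0 (snd p) r (t, fst p))) \<in> borel_measurable borel"
    by (intro borel_measurable_kin_traj[OF f] continuous_intros)
  moreover have "(\<lambda>p::'n phase \<times> 'n phase. chi (snd p)) \<in> borel_measurable borel"
    by (intro borel_measurable_comp_continuous[OF chi] continuous_intros)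
  ultimately have "(\<lambda>(y, m). f (kin_traj m0 m r (t, y)) * chi m) \<in> borel_measurable (lborel \<Otimes>\<^sub>M lborel)"
    by (simp add: lborel_prod case_prod_beta')
  then show ?thesis
    unfolding kin_moll_def by measurable
qed

lemma kin_moll_sq_le:
  assumes chi: "chi \<in> borel_measurable borel" and chi_nonneg: "\<And>m. 0 \<le> chi m"
    and chi_int: "(\<integral>\<^sup>+m. ennreal (chi m) \<partial>lborel) = ennreal c" and c: "0 < c"
    and f: "f \<in> borel_measurable borel"
  shows "ennreal ((kin_moll m0 chi r f (t, y))\<^sup>2)
    \<le> ennreal (1 / c) * (\<integral>\<^sup>+m. ennreal ((f (kin_traj m0 m r (t, y)))\<^sup>2 * chi m) \<partial>lborel)"
proof -
  have "integral\<^sup>L lborel chi = c"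
    using chi_int chi_nonneg chi c by (subst integral_eq_nn_integral) auto
  moreover have "(\<lambda>m. f (kin_traj m0 m r (t, y))) \<in> borel_measurable borel"
    by (intro borel_measurable_kin_traj[OF f] continuous_intros)
  ultimately show ?thesis
    using weighted_average_sq_le[of "\<lambda>m. f (kin_traj m0 m r (t, y))" lborel chi c] chi chi_nonneg chi_int c
    by (simp add: kin_moll_def)
qed

lemma nn_integral_kin_traj_sq_le:
  fixes chi :: "'n::finite phase \<Rightarrow> real"
  assumes chi_le: "\<And>m. chi m \<le> M" and M: "0 \<le> M" and f: "f \<in> borel_measurable borel"
    and m0: "m0 \<noteq> 0" and r: "0 < r"
  shows "(\<integral>\<^sup>+m. ennreal ((f (kin_traj m0 m r (t, y)))\<^sup>2 * chi m) \<partial>lborel)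
    \<le> ennreal (M / r ^ (2 * CARD('n))) * (\<integral>\<^sup>+z. ennreal ((f (t + m0 * r, z))\<^sup>2) \<partial>lborel)"
proof -
  have f_sq: "(\<lambda>w. ennreal ((f w)\<^sup>2)) \<in> borel_measurable borel"
    using f by measurable
  have "(\<integral>\<^sup>+m. ennreal ((f (kin_traj m0 m r (t, y)))\<^sup>2 * chi m) \<partial>lborel)
      \<le> (\<integral>\<^sup>+m. ennreal M * ennreal ((f (kin_traj m0 m r (t, y)))\<^sup>2) \<partial>lborel)"
    using chi_le M
    by (intro nn_integral_mono) (simp add: ennreal_mult[symmetric] mult.commute mult_right_mono ennreal_leI)
  also have "\<dots> = ennreal M * (\<integral>\<^sup>+m. ennreal ((f (kin_traj m0 m r (t, y)))\<^sup>2) \<partial>lborel)"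
    by (rule nn_integral_cmult)
      (simp only: measurable_lborel2, intro borel_measurable_kin_traj[OF f_sq] continuous_intros)
  also have "\<dots> = ennreal M * ennreal (1 / r ^ (2 * CARD('n))) * (\<integral>\<^sup>+z. ennreal ((f (t + m0 * r, z))\<^sup>2) \<partial>lborel)"
    by (simp add: nn_integral_kin_traj_wrt_m[OF f_sq m0 r] mult.assoc)
  finally show ?thesis
    using M r by (simp add: ennreal_mult[symmetric])
qed

lemma nn_integral_nn_integral_kin_traj_sq:
  fixes chi :: "'n::finite phase \<Rightarrow> real"
  assumes chi: "chi \<in> borel_measurable borel" and chi_nonneg: "\<And>m. 0 \<le> chi m"
    and f: "f \<in> borel_measurable borel"
  shows "(\<integral>\<^sup>+y. \<integral>\<^sup>+m. ennreal ((f (kin_traj m0 m r (t, y)))\<^sup>2 * chi m) \<partial>lborel \<partial>lborel)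
    = (\<integral>\<^sup>+m. ennreal (chi m) \<partial>lborel) * (\<integral>\<^sup>+z. ennreal ((f (t + m0 * r, z))\<^sup>2) \<partial>lborel)"
proof -
  have f_sq: "(\<lambda>w. ennreal ((f w)\<^sup>2)) \<in> borel_measurable borel"
    using f by measurable
  have [measurable]: "(\<lambda>p. ennreal ((f (kin_traj m0 (fst p) r (t, snd p)))\<^sup>2)) \<in> borel_measurable borel"
    "(\<lambda>p::'n phase \<times> 'n phase. chi (fst p)) \<in> borel_measurable borel"
    by (intro borel_measurable_kin_traj[OF f_sq] borel_measurable_comp_continuous[OF chi] continuous_intros)+
  have "(\<integral>\<^sup>+y. \<integral>\<^sup>+m. ennreal ((f (kin_traj m0 m r (t, y)))\<^sup>2 * chi m) \<partial>lborel \<partial>lborel)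
      = (\<integral>\<^sup>+m. \<integral>\<^sup>+y. ennreal ((f (kin_traj m0 m r (t, y)))\<^sup>2) * ennreal (chi m) \<partial>lborel \<partial>lborel)"
    using chi_nonneg by (subst lborel_pair.Fubini') (simp_all add: lborel_prod case_prod_beta' ennreal_mult)
  also have "\<dots> = (\<integral>\<^sup>+m. (\<integral>\<^sup>+z. ennreal ((f (t + m0 * r, z))\<^sup>2) \<partial>lborel) * ennreal (chi m) \<partial>lborel)"
  proof (rule nn_integral_cong)
    fix m :: "'n phase"
    have "(\<lambda>y. ennreal ((f (kin_traj m0 m r (t, y)))\<^sup>2)) \<in> borel_measurable lborel"
      unfolding measurable_lborel2 by (intro borel_measurable_kin_traj[OF f_sq] continuous_intros)
    then show "(\<integral>\<^sup>+y. ennreal ((f (kin_traj m0 m r (t, y)))\<^sup>2) * ennreal (chi m) \<partial>lborel)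
        = (\<integral>\<^sup>+z. ennreal ((f (t + m0 * r, z))\<^sup>2) \<partial>lborel) * ennreal (chi m)"
      by (simp add: nn_integral_multc nn_integral_kin_traj_wrt_y[OF f_sq])
  qed
  also have "\<dots> = (\<integral>\<^sup>+m. ennreal (chi m) \<partial>lborel) * (\<integral>\<^sup>+z. ennreal ((f (t + m0 * r, z))\<^sup>2) \<partial>lborel)"
    using chi by (subst nn_integral_cmult) (simp_all add: mult.commute)
  finally show ?thesis .
qed

lemma abs_kin_moll_le:
  fixes chi :: "'n::finite phase \<Rightarrow> real" and f :: "real \<times> 'n phase \<Rightarrow> real"
  assumes chi: "chi \<in> borel_measurable borel" and chi_nonneg: "\<And>m. 0 \<le> chi m" and chi_le: "\<And>m. chi m \<le> M"
    and chi_int: "(\<integral>\<^sup>+m. ennreal (chi m) \<partial>lborel) = ennreal c" and c: "0 < c"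
    and m0: "m0 \<noteq> 0" and r: "0 < r" and f: "f \<in> borel_measurable borel"
    and f_L2: "integrable lborel (\<lambda>z. (f (t + m0 * r, z))\<^sup>2)"
  shows "\<bar>kin_moll m0 chi r f (t, y)\<bar> \<le> sqrt (M / c) / r ^ CARD('n) * sqrt (\<integral>z. (f (t + m0 * r, z))\<^sup>2 \<partial>lborel)"
proof -
  define N where "N = (\<integral>z. (f (t + m0 * r, z))\<^sup>2 \<partial>lborel)"
  have N: "(\<integral>\<^sup>+z. ennreal ((f (t + m0 * r, z))\<^sup>2) \<partial>lborel) = ennreal N" and N_nonneg: "0 \<le> N"
    using f_L2 by (simp_all add: N_def nn_integral_eq_integral)
  have M: "0 \<le> M"
    using chi_nonneg chi_le order_trans by blast
  have "ennreal ((kin_moll m0 chi r f (t, y))\<^sup>2) \<le> ennreal (1 / c) * (ennreal (M / r ^ (2 * CARD('n))) * ennreal N)"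
    using kin_moll_sq_le[OF chi chi_nonneg chi_int c f, of m0 r t y]
      nn_integral_kin_traj_sq_le[where chi = chi, OF chi_le M f m0 r, of t y]
    by (simp add: N) (meson mult_left_mono order_trans zero_le)
  also have "\<dots> = ennreal ((sqrt (M / c) / r ^ CARD('n) * sqrt N)\<^sup>2)"
    using c M N_nonneg r power_mult[of r "CARD('n)" 2]
    by (simp add: ennreal_mult[symmetric] power_mult_distrib power_divide mult.commute)
  finally have "\<bar>kin_moll m0 chi r f (t, y)\<bar>\<^sup>2 \<le> (sqrt (M / c) / r ^ CARD('n) * sqrt N)\<^sup>2"
    by (simp add: ennreal_le_iff)
  then show ?thesis
    unfolding N_def[symmetric] by (rule power2_le_imp_le) (use c M N_nonneg r in auto)
qed

lemma nn_integral_kin_moll_sq_le: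
  fixes chi :: "'n::finite phase \<Rightarrow> real" and f :: "real \<times> 'n phase \<Rightarrow> real"
  assumes chi: "chi \<in> borel_measurable borel" and chi_nonneg: "\<And>m. 0 \<le> chi m"
    and chi_int: "(\<integral>\<^sup>+m. ennreal (chi m) \<partial>lborel) = ennreal c" and c: "0 < c"
    and f: "f \<in> borel_measurable borel"
  shows "(\<integral>\<^sup>+y. ennreal ((kin_moll m0 chi r f (t, y))\<^sup>2) \<partial>lborel)
    \<le> (\<integral>\<^sup>+z. ennreal ((f (t + m0 * r, z))\<^sup>2) \<partial>lborel)"
proof -
  define T where "T y = (\<integral>\<^sup>+m. ennreal ((f (kin_traj m0 m r (t, y)))\<^sup>2 * chi m) \<partial>lborel)" for y
  have [measurable]: "(\<lambda>p. f (kin_traj m0 (snd p) r (t, fst p))) \<in> borel_measurable borel"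
    "(\<lambda>p::'n phase \<times> 'n phase. chi (snd p)) \<in> borel_measurable borel"
    by (intro borel_measurable_kin_traj[OF f] borel_measurable_comp_continuous[OF chi] continuous_intros)+
  have "T \<in> borel_measurable lborel"
    unfolding T_def[abs_def] by (rule lborel.borel_measurable_nn_integral) (simp add: lborel_prod case_prod_beta')
  then have "(\<integral>\<^sup>+y. ennreal (1 / c) * T y \<partial>lborel)
      = ennreal (1 / c) * ennreal c * (\<integral>\<^sup>+z. ennreal ((f (t + m0 * r, z))\<^sup>2) \<partial>lborel)"
    using nn_integral_nn_integral_kin_traj_sq[OF chi chi_nonneg f, of m0 r t]
    by (subst nn_integral_cmult) (simp_all add: T_def[abs_def] chi_int mult.assoc)
  moreover have "ennreal (1 / c) * ennreal c = 1"
    using c by (simp flip: ennreal_mult)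
  ultimately show ?thesis
    using nn_integral_mono[of lborel "\<lambda>y. ennreal ((kin_moll m0 chi r f (t, y))\<^sup>2)",
        OF kin_moll_sq_le[OF chi chi_nonneg chi_int c f]]
    by (simp add: T_def)
qed

lemma Lp_norm_kin_moll_le:
  fixes chi :: "'n::finite phase \<Rightarrow> real" and f :: "real \<times> 'n phase \<Rightarrow> real"
  assumes chi: "chi \<in> borel_measurable borel" and chi_nonneg: "\<And>m. 0 \<le> chi m" and chi_le: "\<And>m. chi m \<le> M"
    and chi_int: "(\<integral>\<^sup>+m. ennreal (chi m) \<partial>lborel) = ennreal c" and c: "0 < c"
    and m0: "m0 \<noteq> 0" and r: "0 < r" and f: "f \<in> borel_measurable borel"
    and f_L2: "integrable lborel (\<lambda>z. (f (t + m0 * r, z))\<^sup>2)" and q: "2 < q"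
  shows "Lp_norm q (\<lambda>y. kin_moll m0 chi r f (t, y))
    \<le> ennreal ((sqrt (M / c) / r ^ CARD('n)) powr (1 - 2 / q)) * Lp_norm 2 (\<lambda>z. f (t + m0 * r, z))"
proof -
  define N where "N = (\<integral>z. (f (t + m0 * r, z))\<^sup>2 \<partial>lborel)"
  have N: "(\<integral>\<^sup>+z. ennreal ((f (t + m0 * r, z))\<^sup>2) \<partial>lborel) = ennreal N" and N_nonneg: "0 \<le> N"
    using f_L2 by (simp_all add: N_def nn_integral_eq_integral)
  have M: "0 \<le> M"
    using chi_nonneg chi_le order_trans by blast
  have "\<bar>kin_moll m0 chi r f (t, y)\<bar> \<le> sqrt (M / c) / r ^ CARD('n) * sqrt N" for y
    unfolding N_def by (rule abs_kin_moll_le[OF chi chi_nonneg chi_le chi_int c m0 r f f_L2])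
  moreover have "(\<integral>\<^sup>+y. ennreal ((kin_moll m0 chi r f (t, y))\<^sup>2) \<partial>lborel) \<le> ennreal ((sqrt N)\<^sup>2)"
    using nn_integral_kin_moll_sq_le[OF chi chi_nonneg chi_int c f, of m0 r t] N N_nonneg by simp
  ultimately have "Lp_norm q (\<lambda>y. kin_moll m0 chi r f (t, y))
      \<le> ennreal ((sqrt (M / c) / r ^ CARD('n)) powr (1 - 2 / q) * sqrt N)"
    using borel_measurable_kin_moll[OF f chi] M N_nonneg c r q
    by (intro Lp_norm_le_interpolation) auto
  moreover have "Lp_norm 2 (\<lambda>z. f (t + m0 * r, z)) = ennreal (sqrt N)"
    using Lp_norm_eq[of "\<lambda>z. f (t + m0 * r, z)" 2 N] N N_nonneg by (simp add: powr_half_sqrt)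
  ultimately show ?thesis
    using N_nonneg by (simp add: ennreal_mult)
qed

lemma Lp_norm_kin_moll_rescaled_le:
  fixes chi :: "'n::finite phase \<Rightarrow> real" and f :: "real \<times> 'n phase \<Rightarrow> real"
  assumes chi: "chi \<in> borel_measurable borel" and chi_nonneg: "\<And>m. 0 \<le> chi m" and chi_le: "\<And>m. chi m \<le> M"
    and chi_int: "(\<integral>\<^sup>+m. ennreal (chi m) \<partial>lborel) = ennreal c" and c: "0 < c" and \<sigma>: "0 < \<sigma>"
    and m0: "m0 \<noteq> 0" and r: "0 < r" and f: "f \<in> borel_measurable borel"
    and f_L2: "integrable lborel (\<lambda>z. (f (t + m0 * r, z))\<^sup>2)" and q: "2 < q"
  shows "Lp_norm q (\<lambda>y. kin_moll m0 (\<lambda>m. chi ((1 / \<sigma>) *\<^sub>R m)) r f (t, y))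
    \<le> ennreal (sqrt (M / c) powr (1 - 2 / q) * \<sigma> powr (- CARD('n) * (1 - 2 / q))
                * r powr (- CARD('n) * (1 - 2 / q))) * Lp_norm 2 (\<lambda>z. f (t + m0 * r, z))"
proof -
  define n where "n = CARD('n)"
  have chi_\<sigma>: "(\<lambda>m. chi ((1 / \<sigma>) *\<^sub>R m)) \<in> borel_measurable borel"
    by (rule borel_measurable_comp_continuous[OF chi]) (intro continuous_intros)
  have "(\<integral>\<^sup>+m. ennreal (chi ((1 / \<sigma>) *\<^sub>R m)) \<partial>lborel) = ennreal (\<sigma> ^ (2 * n) * c)"
    using nn_integral_lborel_scale[of "\<lambda>m. ennreal (chi m)", OF _ \<sigma>] chi \<sigma> c
    by (simp add: chi_int n_def ennreal_mult mult_2)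
  moreover have "0 < \<sigma> ^ (2 * n) * c"
    using \<sigma> c by simp
  ultimately have "Lp_norm q (\<lambda>y. kin_moll m0 (\<lambda>m. chi ((1 / \<sigma>) *\<^sub>R m)) r f (t, y))
    \<le> ennreal ((sqrt (M / (\<sigma> ^ (2 * n) * c)) / r ^ n) powr (1 - 2 / q)) * Lp_norm 2 (\<lambda>z. f (t + m0 * r, z))"
    unfolding n_def using chi_nonneg chi_le by (intro Lp_norm_kin_moll_le chi_\<sigma> m0 r f f_L2 q)
  also have "sqrt (M / (\<sigma> ^ (2 * n) * c)) / r ^ n = sqrt (M / c) * \<sigma> powr (- n) * r powr (- n)"
  proof -
    have "sqrt (M / (\<sigma> ^ (2 * n) * c)) = sqrt (M / c) / \<sigma> ^ n"
      using \<sigma> by (simp add: power_even_eq real_sqrt_divide real_sqrt_mult)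
    moreover have "\<sigma> powr (- n) = 1 / \<sigma> ^ n" and "r powr (- n) = 1 / r ^ n"
      using \<sigma> r by (simp_all add: powr_minus_divide powr_realpow)
    ultimately show ?thesis
      by simp
  qed
  finally show ?thesis
    by (simp add: n_def powr_mult powr_powr)
qed

theorem mainTheorem2:
  fixes chi_tilde :: "'n::finite phase \<Rightarrow> real"
    and q \<theta> :: real
  assumes chi_nonneg: "\<And>z. chi_tilde z \<ge> 0"
    and chi_smooth: "smooth_fun chi_tilde"
    and chi_supp: "compact (closure {z. chi_tilde z \<noteq> 0})"
    and chi_nonzero: "\<exists>z. chi_tilde z \<noteq> 0"
    and q: "2 < q"
    and \<theta>: "1 < \<theta>"
    and young: "1/2 + 1/\<theta> = 1/q + 1"
  shows "\<exists>C>0. \<forall>\<sigma>>0. \<forall>m0\<in>{-1, 1::real}.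
           AE r in lborel. r > 0 \<longrightarrow>
             (\<forall>f :: real \<times> 'n phase \<Rightarrow> real. \<forall>t.
                f \<in> borel_measurable lborel \<longrightarrow>
                (\<forall>s. integrable lborel (\<lambda>y. (f (s, y))\<^sup>2)) \<longrightarrow>
                Lp_norm q (\<lambda>y. kin_moll m0 (\<lambda>m. chi_tilde ((1/\<sigma>) *\<^sub>R m)) r f (t, y))
                  \<le> ennreal (C * \<sigma> powr (2 * CARD('n) * (1/\<theta> - 1))
                               * r powr (2 * CARD('n) * (1/\<theta> - 1)))
                    * Lp_norm 2 (\<lambda>y. f (t + m0 * r, y)))"
proof -
  have cont: "continuous_on UNIV chi_tilde"
    using chi_smooth by (rule smooth_fun_imp_continuous_on)
  obtain M where M: "\<And>z. chi_tilde z \<le> M"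
    using bounded_range_compact_support[OF cont chi_supp] by (metis bounded_iff abs_le_D1 rangeI real_norm_def)
  define c where "c = integral\<^sup>L lborel chi_tilde"
  have chi_int: "(\<integral>\<^sup>+z. ennreal (chi_tilde z) \<partial>lborel) = ennreal c"
    using integrable_compact_support[OF cont chi_supp] chi_nonneg by (simp add: c_def nn_integral_eq_integral)
  obtain z0 where z0: "0 < chi_tilde z0"
    using chi_nonzero chi_nonneg by (metis less_eq_real_def)
  have c: "0 < c"
    using nn_integral_lborel_pos_continuous[OF cont z0] by (simp add: chi_int)
  define C where "C = sqrt (M / c) powr (1 - 2 / q)"
  have exponent: "2 * real CARD('n) * (1/\<theta> - 1) = - CARD('n) * (1 - 2 / q)"
    using young by (simp add: field_simps)
  show ?thesis
  proof (intro exI[of _ C] conjI allI impI ballI AE_I2)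
    show "0 < C"
      using z0 M[of z0] c by (simp add: C_def)
  next
    fix \<sigma> m0 r :: real and f :: "real \<times> 'n phase \<Rightarrow> real" and t :: real
    assume \<sigma>: "0 < \<sigma>" and m0: "m0 \<in> {-1, 1}" and r: "0 < r" and f: "f \<in> borel_measurable lborel"
      and f_L2: "\<forall>s. integrable lborel (\<lambda>y. (f (s, y))\<^sup>2)"
    have "m0 \<noteq> 0"
      using m0 by auto
    from Lp_norm_kin_moll_rescaled_le[OF borel_measurable_continuous_onI[OF cont] chi_nonneg M chi_int c \<sigma>
        this r _ f_L2[rule_format] q] f
    show "Lp_norm q (\<lambda>y. kin_moll m0 (\<lambda>m. chi_tilde ((1/\<sigma>) *\<^sub>R m)) r f (t, y))
        \<le> ennreal (C * \<sigma> powr (2 * CARD('n) * (1/\<theta> - 1)) * r powr (2 * CARD('n) * (1/\<theta> - 1)))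
          * Lp_norm 2 (\<lambda>y. f (t + m0 * r, y))"
      by (simp add: C_def exponent)
  qed
qed

end
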